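(* Let $F$ be a dill map on $A^{\mathbb N}$ with diameter $\delta$ and local rule $f$. The following are equivalent: (1) $F$ induces a well-defined map on the Besicovitch space, i.e. for all $x,y\in A^{\mathbb N}$, $\mathfrak d_H(x,y)=0$ implies $\mathfrak d_H(F(x),F(y))=0$; (2) $F$ is $\frac{\delta D_{\max}}{\lfloor f\rfloor}$-Lipschitz with respect to $\mathfrak d_H$, i.e. $\mathfrak d_H(F(x),F(y))\le \frac{\delta D_{\max}}{\lfloor f\rfloor}\,\mathfrak d_H(x,y)$ for all $x,y\in A^{\mathbb N}$; (3) $F$ is either a constant map or uniform.
   Context: $A$ is a finite alphabet, $A^{\mathbb N}$ the infinite sequences over $A$, $x_{[i,j)}=x_i\cdots x_{j-1}$. A dill map with diameter $\delta\ge1$ and local rule $f:A^\delta\to A^+$ (nonempty words) is $F(x)=f(x_{[0,\delta)})f(x_{[1,\delta+1)})\cdots$. Lower norm $\lfloor f\rfloor=\min\{|f(u)|:u\in A^\delta\}$, upper norm $\lceil f\rceil=\max\{|f(u)|:u\in A^\delta\}$; $F$ is uniform if $\lfloor f\rfloor=\lceil f\rceil$. For words $u,v$ of equal length, $d_H(u,v)$ is the number of positions where they differ. $D_{\max}=\max\{d_H(f(u),f(v)):u,v\in A^\delta\}$ (taken over pairs with $|f(u)|=|f(v)|$). The Besicovitch pseudo-metric is $\mathfrak d_H(x,y)=\limsup_{l\to\infty}\frac{d_H(x_{[0,l)},y_{[0,l)})}{l}$. *)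

theory Defs
  imports "HOL-Library.Liminf_Limsup" "HOL-Library.Extended_Real"
begin

definition factor :: "(nat \<Rightarrow> 'a) \<Rightarrow> nat \<Rightarrow> nat \<Rightarrow> 'a list" where
  "factor x i j = map x [i..<j]"

definition dill_block :: "('a list \<Rightarrow> 'b list) \<Rightarrow> nat \<Rightarrow> (nat \<Rightarrow> 'a) \<Rightarrow> nat \<Rightarrow> 'b list" where
  "dill_block f \<delta> x k = f (factor x k (k + \<delta>))"

definition dill_start :: "('a list \<Rightarrow> 'b list) \<Rightarrow> nat \<Rightarrow> (nat \<Rightarrow> 'a) \<Rightarrow> nat \<Rightarrow> nat" where
  "dill_start f \<delta> x k = (\<Sum>i<k. length (dill_block f \<delta> x i))"

text \<open>The dill map F(x) = f(x_[0,delta)) f(x_[1,delta+1)) ... (infinite concatenation);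
  position n lies in the first block k whose end exceeds n.\<close>
definition dill_map :: "('a list \<Rightarrow> 'b list) \<Rightarrow> nat \<Rightarrow> (nat \<Rightarrow> 'a) \<Rightarrow> nat \<Rightarrow> 'b" where
  "dill_map f \<delta> x n =
     (let k = (LEAST k. n < dill_start f \<delta> x (Suc k))
      in dill_block f \<delta> x k ! (n - dill_start f \<delta> x k))"

definition local_rule :: "nat \<Rightarrow> ('a list \<Rightarrow> 'b list) \<Rightarrow> bool" where
  "local_rule \<delta> f \<longleftrightarrow> 1 \<le> \<delta> \<and> (\<forall>u. length u = \<delta> \<longrightarrow> f u \<noteq> [])"

definition lower_norm :: "nat \<Rightarrow> ('a list \<Rightarrow> 'b list) \<Rightarrow> nat" where
  "lower_norm \<delta> f = Min ((\<lambda>u. length (f u)) ` {u. length u = \<delta>})"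

definition upper_norm :: "nat \<Rightarrow> ('a list \<Rightarrow> 'b list) \<Rightarrow> nat" where
  "upper_norm \<delta> f = Max ((\<lambda>u. length (f u)) ` {u. length u = \<delta>})"

definition uniform :: "nat \<Rightarrow> ('a list \<Rightarrow> 'b list) \<Rightarrow> bool" where
  "uniform \<delta> f \<longleftrightarrow> lower_norm \<delta> f = upper_norm \<delta> f"

text \<open>Hamming distance of words (intended for equal lengths).\<close>
definition hamming :: "'a list \<Rightarrow> 'a list \<Rightarrow> nat" where
  "hamming u v = card {i. i < length u \<and> u ! i \<noteq> v ! i}"

definition D_max :: "nat \<Rightarrow> ('a list \<Rightarrow> 'b list) \<Rightarrow> nat" where
  "D_max \<delta> f = Max {hamming (f u) (f v) | u v.
      length u = \<delta> \<and> length v = \<delta> \<and> length (f u) = length (f v)}"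

definition besicovitch :: "(nat \<Rightarrow> 'a) \<Rightarrow> (nat \<Rightarrow> 'a) \<Rightarrow> ereal" where
  "besicovitch x y =
     limsup (\<lambda>l. ereal (real (card {i. i < l \<and> x i \<noteq> y i}) / real l))"

end

theory Submission
  imports Defs "HOL-Library.Omega_Words_Fun" "HOL-Analysis.Extended_Real_Limits"
begin

(* A uniform rule with block length L turns the first l output symbols into about l / L
   blocks; a block differs in at most D_max symbols, and only if its input window contains a
   mismatch, which lies in at most delta windows. This gives (3) ==> (2), and (2) ==> (1) is
   immediate.

   For (1) ==> (3): if x and y agree from position m on, then from some position on F x and F y
   are the same sequence G = F (suffix m x), shifted against each other by the difference of the
   output lengths of the two prefixes. For periodic G, Besicovitch distance zero between G and a
   shift of G forces the shift to be a period. If f is not uniform, prepending two windows with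
   outputs of different lengths (or their tails) to a periodic point shows that its image has a
   period of at most delta * upper_norm. Hence a periodic point starting with a long block of a's
   has the same image as the constant sequence a, whose image in turn is periodic with every
   dill_start y k as a period. Shifting such a periodic point so that it starts with a prefix of
   an arbitrary x shows F x = F (\<lambda>_. a). *)

(* Otherwise the simplifier eta-expands partial applications suffix m x into lambda terms. *)
declare suffix_nth [simp del]

section \<open>Periodic sequences\<close>

lemma suffix_periodic_add:
  assumes "suffix p G = G" "suffix q G = G"
  shows "suffix (p + q) G = G"
  by (metis assms suffix_suffix)

lemma suffix_periodic_diff:
  assumes "suffix p G = G" "suffix q G = G" "q \<le> p"
  shows "suffix (p - q) G = G"
  by (metis assms le_add_diff_inverse suffix_suffix)

lemma suffix_periodic_mult:
  assumes "suffix p G = G"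
  shows "suffix (k * p) G = G"
proof (induction k)
  case (Suc k)
  then show ?case by (metis suffix_periodic_add[OF assms] mult_Suc)
qed simp

lemma suffix_periodic_mod:
  assumes "suffix p G = G"
  shows "G j = G (j mod p)"
  by (metis suffix_periodic_mult[OF assms, of "j div p"] suffix_nth mod_div_mult_eq add.commute)

lemma suffix_periodic_eqI:
  assumes G: "suffix p G = G" "0 < p" and H: "suffix q H = H" "0 < q"
    and agree: "\<And>i. i < p + q \<Longrightarrow> G i = H i"
  shows "G = H"
proof -
  have "H (i + p) = H i" for i
  proof -
    have small: "i mod q < p + q" "i mod q + p < p + q" using mod_less_divisor[OF H(2), of i] by linarith+
    have "H (i + p) = H (i mod q + p)"
      by (metis suffix_periodic_mod[OF H(1)] mod_add_left_eq)
    also have "\<dots> = G (i mod q + p)" using agree small by simp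
    also have "\<dots> = G (i mod q)" by (metis G(1) suffix_nth add.commute)
    also have "\<dots> = H i" using agree small suffix_periodic_mod[OF H(1), of i] by simp
    finally show ?thesis .
  qed
  then have Hp: "suffix p H = H" by (simp add: fun_eq_iff suffix_nth add.commute)
  show ?thesis
  proof
    fix i
    have "i mod p < p + q" using mod_less_divisor[OF G(2), of i] by linarith
    then show "G i = H i"
      using agree suffix_periodic_mod[OF G(1), of i] suffix_periodic_mod[OF Hp, of i] by metis
  qed
qed

section \<open>Blocks of a dill map\<close>

lemma factor_eq_subsequence: "factor x i j = subsequence x i j"
  by (simp add: factor_def subsequence_def)

lemma factor_suffix: "factor (suffix m x) i j = factor x (m + i) (m + j)"
  by (simp add: factor_eq_subsequence)

lemma dill_block_suffix: "dill_block f \<delta> (suffix m x) k = dill_block f \<delta> x (m + k)"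
  unfolding dill_block_def factor_suffix by (simp add: add.assoc)

lemma dill_start_0 [simp]: "dill_start f \<delta> x 0 = 0"
  by (simp add: dill_start_def)

lemma dill_start_Suc:
  "dill_start f \<delta> x (Suc k) = dill_start f \<delta> x k + length (dill_block f \<delta> x k)"
  by (simp add: dill_start_def)

lemma dill_start_add:
  "dill_start f \<delta> x (m + k) = dill_start f \<delta> x m + dill_start f \<delta> (suffix m x) k"
  by (induction k) (simp_all add: dill_start_Suc dill_block_suffix)

lemma dill_block_local:
  assumes "\<And>i. i < k + \<delta> \<Longrightarrow> x i = y i"
  shows "dill_block f \<delta> x k = dill_block f \<delta> y k"
  using assms unfolding dill_block_def factor_def by (intro arg_cong[where f = f] map_cong) auto

lemma dill_start_local:
  assumes "\<And>i. i < M + \<delta> \<Longrightarrow> x i = y i" "k \<le> M"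
  shows "dill_start f \<delta> x k = dill_start f \<delta> y k"
  using assms(2)
proof (induction k)
  case (Suc k)
  then have "dill_block f \<delta> x k = dill_block f \<delta> y k" using assms(1) by (intro dill_block_local) auto
  with Suc show ?case by (simp add: dill_start_Suc)
qed simp

section \<open>Mismatch density and the Besicovitch pseudo-metric\<close>

definition mismatches :: "(nat \<Rightarrow> 'a) \<Rightarrow> (nat \<Rightarrow> 'a) \<Rightarrow> nat \<Rightarrow> nat" where
  "mismatches x y l = card {i. i < l \<and> x i \<noteq> y i}"

definition mismatch_density :: "(nat \<Rightarrow> 'a) \<Rightarrow> (nat \<Rightarrow> 'a) \<Rightarrow> nat \<Rightarrow> real" where
  "mismatch_density x y l = real (mismatches x y l) / real l"

lemma besicovitch_eq_limsup: "besicovitch x y = limsup (\<lambda>l. ereal (mismatch_density x y l))"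
  by (simp add: besicovitch_def mismatch_density_def mismatches_def)

lemma mismatches_le: "mismatches x y l \<le> l"
  unfolding mismatches_def by (rule order.trans[OF card_mono[of "{..<l}"]]) auto

lemma mismatches_0 [simp]: "mismatches x y 0 = 0"
  by (simp add: mismatches_def)

lemma mismatches_self [simp]: "mismatches x x l = 0"
  by (simp add: mismatches_def)

lemma mismatches_mono: "l \<le> l' \<Longrightarrow> mismatches x y l \<le> mismatches x y l'"
  unfolding mismatches_def by (intro card_mono) auto

lemma mismatches_add:
  "mismatches x y (l + m) = mismatches x y l + mismatches (suffix l x) (suffix l y) m"
proof -
  have "{i. i < l + m \<and> x i \<noteq> y i} =
      {i. i < l \<and> x i \<noteq> y i} \<union> (+) l ` {i. i < m \<and> suffix l x i \<noteq> suffix l y i}"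
    by (auto simp: suffix_nth image_iff) (metis add_diff_inverse_nat add_less_cancel_left)
  moreover have "{i. i < l \<and> x i \<noteq> y i} \<inter> (+) l ` {i. i < m \<and> suffix l x i \<noteq> suffix l y i} = {}"
    by auto
  ultimately show ?thesis
    unfolding mismatches_def by (simp add: card_Un_disjoint card_image)
qed

lemma mismatches_cong:
  assumes "\<And>i. i < l \<Longrightarrow> x i = x' i" "\<And>i. i < l \<Longrightarrow> y i = y' i"
  shows "mismatches x y l = mismatches x' y' l"
  unfolding mismatches_def using assms by (intro arg_cong[where f = card]) auto

lemma mismatches_eq_sum: "mismatches x y l = (\<Sum>i<l. of_bool (x i \<noteq> y i))"
proof -
  have "{..<l} \<inter> {i. x i \<noteq> y i} = {i. i < l \<and> x i \<noteq> y i}" by auto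
  then show ?thesis by (simp add: mismatches_def)
qed

lemma hamming_eq_mismatches: "hamming u v = mismatches ((!) u) ((!) v) (length u)"
  by (simp add: hamming_def mismatches_def)

lemma sum_mismatches_windows_le:
  "(\<Sum>k<K. mismatches (suffix k x) (suffix k y) d) \<le> d * mismatches x y (K + d)"
proof -
  have "(\<Sum>k<K. mismatches (suffix k x) (suffix k y) d)
      = (\<Sum>k<K. \<Sum>i<d. of_bool (x (k + i) \<noteq> y (k + i)))"
    by (simp only: mismatches_eq_sum suffix_nth)
  also have "\<dots> = (\<Sum>i<d. \<Sum>k<K. of_bool (x (i + k) \<noteq> y (i + k)))"
    by (subst sum.swap) (simp add: add.commute)
  also have "\<dots> = (\<Sum>i<d. mismatches (suffix i x) (suffix i y) K)"
    by (simp only: mismatches_eq_sum suffix_nth)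
  also have "\<dots> \<le> (\<Sum>i<d. mismatches x y (K + d))"
  proof (rule sum_mono)
    fix i assume "i \<in> {..<d}"
    then have "mismatches (suffix i x) (suffix i y) K \<le> mismatches x y (i + K)"
      by (simp add: mismatches_add)
    also have "\<dots> \<le> mismatches x y (K + d)" using \<open>i \<in> {..<d}\<close> by (intro mismatches_mono) simp
    finally show "mismatches (suffix i x) (suffix i y) K \<le> mismatches x y (K + d)" .
  qed
  finally show ?thesis by simp
qed

lemma mismatch_density_nonneg: "0 \<le> mismatch_density x y l"
  by (simp add: mismatch_density_def)

lemma besicovitch_nonneg: "0 \<le> besicovitch x y"
  unfolding besicovitch_eq_limsup
  by (rule order.trans[OF _ Liminf_le_Limsup]) (simp_all add: Liminf_bounded mismatch_density_nonneg)

lemma besicovitch_eq_0_iff: "besicovitch x y = 0 \<longleftrightarrow> mismatch_density x y \<longlonglongrightarrow> 0"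
proof
  let ?d = "\<lambda>l. ereal (mismatch_density x y l)"
  assume "besicovitch x y = 0"
  then have sup: "limsup ?d = 0" by (simp add: besicovitch_eq_limsup)
  have "0 \<le> liminf ?d" by (simp add: Liminf_bounded mismatch_density_nonneg)
  moreover have "liminf ?d \<le> limsup ?d" by (rule Liminf_le_Limsup) simp
  ultimately have "liminf ?d = 0" using sup by simp
  with sup have "?d \<longlonglongrightarrow> ereal 0" by (intro Liminf_eq_Limsup) simp_all
  then show "mismatch_density x y \<longlonglongrightarrow> 0" by simp
next
  assume "mismatch_density x y \<longlonglongrightarrow> 0"
  then have "(\<lambda>l. ereal (mismatch_density x y l)) \<longlonglongrightarrow> 0"
    by (simp add: zero_ereal_def)
  then show "besicovitch x y = 0"
    unfolding besicovitch_eq_limsup by (simp add: lim_imp_Limsup)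
qed

lemma besicovitch_self: "besicovitch x x = 0"
proof -
  have "mismatch_density x x = (\<lambda>_. 0)" by (simp add: fun_eq_iff mismatch_density_def)
  then show ?thesis by (simp add: besicovitch_eq_0_iff)
qed

lemma besicovitch_eq_0_if_suffix_eq:
  assumes "suffix m x = suffix m y"
  shows "besicovitch x y = 0"
proof -
  have "mismatches x y l \<le> m" for l
  proof -
    have "mismatches x y l \<le> mismatches x y (m + l)" by (rule mismatches_mono) simp
    also have "\<dots> = mismatches x y m" by (simp add: mismatches_add assms)
    finally show ?thesis using mismatches_le order_trans by blast
  qed
  then have "mismatch_density x y l \<le> real m / real l" for l
    by (simp add: mismatch_density_def divide_right_mono)
  then show ?thesis unfolding besicovitch_eq_0_iff
    by (intro tendsto_sandwich[OF _ _ tendsto_const lim_const_over_n[of "real m"]])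
      (simp_all add: mismatch_density_nonneg)
qed

lemma besicovitch_suffix_eq_0:
  assumes "besicovitch x y = 0"
  shows "besicovitch (suffix T x) (suffix T y) = 0"
proof -
  have le: "mismatch_density (suffix T x) (suffix T y) l
      \<le> mismatch_density x y (l + T) * (1 + real T / real l)" if "0 < l" for l
  proof -
    have "mismatches (suffix T x) (suffix T y) l \<le> mismatches x y (l + T)"
      using mismatches_add[of x y T l] by (simp add: add.commute)
    moreover have "1 + real T / real l = real (l + T) / real l" using that by (simp add: field_simps)
    then have "mismatch_density x y (l + T) * (1 + real T / real l)
        = real (mismatches x y (l + T)) / real l"
      using that by (simp add: mismatch_density_def)
    ultimately show ?thesis
      by (simp add: mismatch_density_def divide_right_mono)
  qed
  have "(\<lambda>l. mismatch_density x y (l + T)) \<longlonglongrightarrow> 0"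
    using assms unfolding besicovitch_eq_0_iff by (rule LIMSEQ_ignore_initial_segment)
  moreover have "(\<lambda>l. 1 + real T / real l) \<longlonglongrightarrow> 1 + 0"
    by (intro tendsto_add tendsto_const lim_const_over_n)
  ultimately have "(\<lambda>l. mismatch_density x y (l + T) * (1 + real T / real l)) \<longlonglongrightarrow> 0 * (1 + 0)"
    by (rule tendsto_mult)
  moreover have "\<forall>\<^sub>F l in sequentially. mismatch_density (suffix T x) (suffix T y) l
      \<le> mismatch_density x y (l + T) * (1 + real T / real l)"
    using eventually_gt_at_top[of 0] by (rule eventually_mono) (rule le)
  ultimately show ?thesis unfolding besicovitch_eq_0_iff
    using tendsto_sandwich[OF always_eventually[OF allI[OF mismatch_density_nonneg]] _ tendsto_const]
    by simp
qed

lemma suffix_periodic_if_besicovitch_eq_0: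
  assumes G: "suffix P G = G" "0 < P" and null: "besicovitch G (suffix T G) = 0"
  shows "suffix T G = G"
proof (rule ccontr)
  assume "suffix T G \<noteq> G"
  then obtain j where "G (T + j) \<noteq> G j" by (auto simp: fun_eq_iff suffix_nth)
  then have j: "G (T + j mod P) \<noteq> G (j mod P)"
    by (metis suffix_periodic_mod[OF G(1)] mod_add_right_eq)
  have Gk: "G (i + k * P) = G i" for i k
    using fun_cong[OF suffix_periodic_mult[OF G(1), of k], of i] by (simp add: suffix_nth add.commute)
  have lower: "1 / real P \<le> mismatch_density G (suffix T G) (Suc N * P)" for N
  proof -
    let ?S = "{i. i < Suc N * P \<and> G i \<noteq> suffix T G i}"
    have sub: "(\<lambda>k. j mod P + k * P) ` {..N} \<subseteq> ?S"
    proof (rule image_subsetI)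
      fix k assume "k \<in> {..N}"
      then have "j mod P + k * P < P + N * P" using G(2) by (simp add: add_less_le_mono)
      moreover have "suffix T G (j mod P + k * P) = G (T + j mod P)"
        using Gk[of "T + j mod P" k] by (simp add: suffix_nth add.assoc)
      ultimately show "j mod P + k * P \<in> ?S"
        using j Gk[of "j mod P" k] by simp
    qed
    have "inj_on (\<lambda>k. j mod P + k * P) {..N}"
      using G(2) by (simp add: inj_on_def)
    then have "Suc N = card ((\<lambda>k. j mod P + k * P) ` {..N})" by (simp add: card_image)
    also have "\<dots> \<le> card ?S" by (rule card_mono) (simp, rule sub)
    finally have "Suc N \<le> card ?S" .
    then have "real (Suc N) / real (Suc N * P) \<le> mismatch_density G (suffix T G) (Suc N * P)"
      unfolding mismatch_density_def mismatches_def by (intro divide_right_mono) simp_all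
    moreover have "real (Suc N) / real (Suc N * P) = 1 / real P"
      by (simp only: of_nat_mult) simp
    ultimately show ?thesis by simp
  qed
  have "strict_mono (\<lambda>N. Suc N * P)" using G(2) by (simp add: strict_mono_Suc_iff)
  with null have "(\<lambda>N. mismatch_density G (suffix T G) (Suc N * P)) \<longlonglongrightarrow> 0"
    unfolding besicovitch_eq_0_iff by (rule LIMSEQ_subseq_LIMSEQ[unfolded comp_def])
  then have "1 / real P \<le> 0" by (rule LIMSEQ_le_const) (use lower in auto)
  with G(2) show False by simp
qed

lemma limsup_compose_le:
  assumes "filterlim h sequentially sequentially"
  shows "limsup (\<lambda>l. u (h l)) \<le> limsup (u :: nat \<Rightarrow> 'a :: complete_lattice)"
proof -
  have "limsup (\<lambda>l. u (h l)) \<le> Limsup (filtermap h sequentially) u"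
    by (rule Limsup_filtermap_ge)
  also have "\<dots> \<le> limsup u"
    unfolding Limsup_def
    by (rule INF_superset_mono) (use assms in \<open>auto simp: filterlim_def le_filter_def\<close>)
  finally show ?thesis .
qed

definition preserves_besicovitch_null :: "((nat \<Rightarrow> 'a) \<Rightarrow> nat \<Rightarrow> 'b) \<Rightarrow> bool" where
  "preserves_besicovitch_null F \<longleftrightarrow> (\<forall>x y. besicovitch x y = 0 \<longrightarrow> besicovitch (F x) (F y) = 0)"

lemma preserves_besicovitch_null_if_lipschitz:
  fixes F :: "(nat \<Rightarrow> 'a) \<Rightarrow> nat \<Rightarrow> 'b"
  assumes "\<And>x y. besicovitch (F x) (F y) \<le> ereal C * besicovitch x y"
  shows "preserves_besicovitch_null F"
  unfolding preserves_besicovitch_null_def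
proof (intro allI impI)
  fix x y :: "nat \<Rightarrow> 'a" assume "besicovitch x y = 0"
  then have "besicovitch (F x) (F y) \<le> 0" using assms[of x y] by simp
  then show "besicovitch (F x) (F y) = 0" using besicovitch_nonneg by (rule order.antisym)
qed

lemma besicovitch_lipschitz_if_constant:
  assumes "\<And>x. F x = c" "0 \<le> C"
  shows "besicovitch (F x) (F y) \<le> ereal C * besicovitch x y"
  using assms besicovitch_nonneg[of x y] by (simp add: besicovitch_self)

section \<open>Shifting the input of a dill map\<close>

locale dill_rule =
  fixes f :: "'a list \<Rightarrow> 'b list" and \<delta> :: nat
  assumes local_rule: "local_rule \<delta> f"
begin

lemma diameter_pos: "0 < \<delta>"
  using local_rule by (simp add: local_rule_def)

lemma dill_block_nonempty: "0 < length (dill_block f \<delta> x k)"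
  using local_rule unfolding local_rule_def dill_block_def by (simp add: factor_def)

lemma strict_mono_dill_start: "strict_mono (dill_start f \<delta> x)"
  unfolding strict_mono_Suc_iff dill_start_Suc using dill_block_nonempty by simp

lemma dill_start_ge: "k \<le> dill_start f \<delta> x k"
  by (rule strict_mono_imp_increasing[OF strict_mono_dill_start])

lemma dill_map_block:
  assumes "i < length (dill_block f \<delta> x k)"
  shows "dill_map f \<delta> x (dill_start f \<delta> x k + i) = dill_block f \<delta> x k ! i"
proof -
  have "(LEAST k'. dill_start f \<delta> x k + i < dill_start f \<delta> x (Suc k')) = k"
  proof (rule Least_equality)
    show "dill_start f \<delta> x k + i < dill_start f \<delta> x (Suc k)"
      using assms by (simp add: dill_start_Suc)
  next
    fix k' assume "dill_start f \<delta> x k + i < dill_start f \<delta> x (Suc k')"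
    then have "dill_start f \<delta> x k < dill_start f \<delta> x (Suc k')" by simp
    then show "k \<le> k'" using strict_mono_less[OF strict_mono_dill_start] by simp
  qed
  then show ?thesis unfolding dill_map_def by (simp add: Let_def)
qed

lemma dill_map_position:
  obtains k i where "n = dill_start f \<delta> x k + i" "i < length (dill_block f \<delta> x k)"
proof -
  have "\<exists>k i. n = dill_start f \<delta> x k + i \<and> i < length (dill_block f \<delta> x k)"
  proof (induction n)
    case 0
    show ?case using dill_block_nonempty[of x 0] by (intro exI[of _ 0]) simp
  next
    case (Suc n)
    then obtain k i where ki: "n = dill_start f \<delta> x k + i" "i < length (dill_block f \<delta> x k)"
      by blast
    show ?case
    proof (cases "Suc i < length (dill_block f \<delta> x k)")
      case True
      with ki show ?thesis by (intro exI[of _ k] exI[of _ "Suc i"]) simp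
    next
      case False
      with ki have "Suc n = dill_start f \<delta> x (Suc k) + 0" by (simp add: dill_start_Suc)
      then show ?thesis using dill_block_nonempty by blast
    qed
  qed
  with that show ?thesis by blast
qed

lemma suffix_dill_map:
  "suffix (dill_start f \<delta> x m) (dill_map f \<delta> x) = dill_map f \<delta> (suffix m x)"
proof
  fix j
  obtain k i where ki: "j = dill_start f \<delta> (suffix m x) k + i"
      "i < length (dill_block f \<delta> (suffix m x) k)"
    by (rule dill_map_position)
  then have "dill_start f \<delta> x m + j = dill_start f \<delta> x (m + k) + i"
    by (simp add: dill_start_add)
  then have "suffix (dill_start f \<delta> x m) (dill_map f \<delta> x) j = dill_block f \<delta> x (m + k) ! i"
    using ki(2) by (simp add: suffix_nth dill_map_block dill_block_suffix)
  also have "\<dots> = dill_map f \<delta> (suffix m x) j"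
    using ki by (simp add: dill_map_block dill_block_suffix)
  finally show "suffix (dill_start f \<delta> x m) (dill_map f \<delta> x) j = dill_map f \<delta> (suffix m x) j" .
qed

lemma dill_map_local:
  assumes "\<And>i. i < M + \<delta> \<Longrightarrow> x i = y i" "n < dill_start f \<delta> x M"
  shows "dill_map f \<delta> x n = dill_map f \<delta> y n"
proof -
  obtain k i where ki: "n = dill_start f \<delta> x k + i" "i < length (dill_block f \<delta> x k)"
    by (rule dill_map_position)
  have "dill_start f \<delta> x k < dill_start f \<delta> x M" using ki assms(2) by simp
  then have "k < M" using strict_mono_less[OF strict_mono_dill_start] by simp
  then have "dill_block f \<delta> x k = dill_block f \<delta> y k" "dill_start f \<delta> x k = dill_start f \<delta> y k"
    using assms(1) by (auto intro: dill_block_local dill_start_local[of M])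
  with ki show ?thesis by (metis dill_map_block)
qed

lemma dill_map_suffix_periodic_start_diff:
  assumes H: "preserves_besicovitch_null (dill_map f \<delta>)"
    and xy: "suffix m x = suffix m y"
    and G: "suffix P (dill_map f \<delta> (suffix m x)) = dill_map f \<delta> (suffix m x)" "0 < P"
  shows "suffix (dill_start f \<delta> x m - dill_start f \<delta> y m) (dill_map f \<delta> (suffix m x))
    = dill_map f \<delta> (suffix m x)"
proof (cases "dill_start f \<delta> x m \<le> dill_start f \<delta> y m")
  case False
  let ?G = "dill_map f \<delta> (suffix m x)"
  let ?Sx = "dill_start f \<delta> x m" and ?Sy = "dill_start f \<delta> y m"
  have "besicovitch (dill_map f \<delta> x) (dill_map f \<delta> y) = 0"
    using H besicovitch_eq_0_if_suffix_eq[OF xy] by (simp add: preserves_besicovitch_null_def)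
  then have "besicovitch (suffix ?Sx (dill_map f \<delta> x)) (suffix ?Sx (dill_map f \<delta> y)) = 0"
    by (rule besicovitch_suffix_eq_0)
  moreover have "suffix ?Sx (dill_map f \<delta> x) = ?G" by (rule suffix_dill_map)
  moreover have "suffix ?Sx (dill_map f \<delta> y) = suffix (?Sx - ?Sy) (suffix ?Sy (dill_map f \<delta> y))"
    using False by simp
  ultimately have "besicovitch ?G (suffix (?Sx - ?Sy) ?G) = 0"
    by (simp add: suffix_dill_map xy)
  then show ?thesis by (rule suffix_periodic_if_besicovitch_eq_0[OF G])
qed simp

lemma dill_map_const_periodic_if_suffix_const:
  assumes H: "preserves_besicovitch_null (dill_map f \<delta>)" and y: "suffix M y = (\<lambda>_. a)"
  shows "suffix (dill_start f \<delta> y M) (dill_map f \<delta> (\<lambda>_. a)) = dill_map f \<delta> (\<lambda>_. a)"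
proof -
  let ?a = "\<lambda>_ :: nat. a"
  let ?c = "dill_map f \<delta> ?a"
  let ?Sa = "dill_start f \<delta> ?a M" and ?Sy = "dill_start f \<delta> y M"
  have suffix_a: "suffix k ?a = ?a" for k by (simp add: fun_eq_iff suffix_nth)
  have c_Sa: "suffix ?Sa ?c = ?c" using suffix_dill_map[of ?a M] by (simp add: suffix_a)
  have c_1: "suffix (dill_start f \<delta> ?a 1) ?c = ?c" using suffix_dill_map[of ?a 1] by (simp add: suffix_a)
  have pos: "0 < dill_start f \<delta> ?a 1" using dill_start_ge[of 1 ?a] by simp
  have down: "suffix (?Sa - ?Sy) ?c = ?c"
    using dill_map_suffix_periodic_start_diff[OF H, of M ?a y] c_1 pos by (simp add: suffix_a y)
  have "suffix (?Sy - ?Sa) ?c = ?c"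
    using dill_map_suffix_periodic_start_diff[OF H, of M y ?a] c_1 pos by (simp add: suffix_a y)
  with c_Sa have up: "suffix (?Sa + (?Sy - ?Sa)) ?c = ?c" by (rule suffix_periodic_add)
  have "?Sa + (?Sy - ?Sa) - (?Sa - ?Sy) = ?Sy" by arith
  then show ?thesis using suffix_periodic_diff[OF up down] by simp
qed

lemma dill_map_const_periodic:
  assumes H: "preserves_besicovitch_null (dill_map f \<delta>)"
  shows "suffix (dill_start f \<delta> y k) (dill_map f \<delta> (\<lambda>_. a)) = dill_map f \<delta> (\<lambda>_. a)"
proof -
  let ?c = "dill_map f \<delta> (\<lambda>_. a)"
  define y' where "y' = prefix (k + \<delta>) y \<frown> (\<lambda>_. a)"
  have tail: "suffix (k + \<delta>) y' = (\<lambda>_. a)"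
    using suffix_conc_length[of "prefix (k + \<delta>) y" "\<lambda>_. a"] by (simp add: y'_def)
  have "dill_start f \<delta> y' k = dill_start f \<delta> y k"
    by (rule dill_start_local[of k]) (simp_all add: y'_def)
  moreover have "dill_start f \<delta> y' (k + \<delta>) = dill_start f \<delta> y' k + dill_start f \<delta> (suffix k y') \<delta>"
    by (rule dill_start_add)
  moreover have "suffix (dill_start f \<delta> y' (k + \<delta>)) ?c = ?c"
    using tail by (rule dill_map_const_periodic_if_suffix_const[OF H])
  moreover have "suffix (dill_start f \<delta> (suffix k y') \<delta>) ?c = ?c"
    by (rule dill_map_const_periodic_if_suffix_const[OF H]) (simp add: tail)
  ultimately show ?thesis
    using suffix_periodic_diff[of "dill_start f \<delta> y' (k + \<delta>)" ?c "dill_start f \<delta> (suffix k y') \<delta>"]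
    by simp
qed

lemma dill_start_conc_diameter:
  assumes "length u = \<delta>"
  shows "dill_start f \<delta> (u \<frown> s) \<delta> = length (f u) + dill_start f \<delta> (drop 1 u \<frown> s) (\<delta> - 1)"
proof -
  have "dill_block f \<delta> (u \<frown> s) 0 = f u"
    using assms by (simp add: dill_block_def factor_eq_subsequence)
  moreover have "suffix 1 (u \<frown> s) = drop 1 u \<frown> s"
    using assms diameter_pos by simp
  ultimately show ?thesis
    using dill_start_add[of f \<delta> "u \<frown> s" 1 "\<delta> - 1"] diameter_pos by (simp add: dill_start_Suc)
qed

end

section \<open>Rules over a finite alphabet and the non-uniform case\<close>

lemma finite_words_length: "finite {u :: 'a::finite list. length u = n}"
  using finite_lists_length_eq[of "UNIV :: 'a set" n] by simp

locale finite_dill_rule = dill_rule f \<delta> for f :: "'a::finite list \<Rightarrow> 'b list" and \<delta> :: nat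
begin

lemma length_le_upper_norm: "length u = \<delta> \<Longrightarrow> length (f u) \<le> upper_norm \<delta> f"
  unfolding upper_norm_def by (rule Max_ge) (simp_all add: finite_words_length)

lemma lower_norm_le_length: "length u = \<delta> \<Longrightarrow> lower_norm \<delta> f \<le> length (f u)"
  unfolding lower_norm_def by (rule Min_le) (simp_all add: finite_words_length)

lemma lower_norm_attained: obtains u where "length u = \<delta>" "lower_norm \<delta> f = length (f u)"
proof -
  have "lower_norm \<delta> f \<in> (\<lambda>u. length (f u)) ` {u. length u = \<delta>}"
    unfolding lower_norm_def
    by (rule Min_in) (auto simp: finite_words_length intro: exI[of _ "replicate \<delta> undefined"])
  with that show ?thesis by blast
qed

lemma upper_norm_attained: obtains u where "length u = \<delta>" "upper_norm \<delta> f = length (f u)"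
proof -
  have "upper_norm \<delta> f \<in> (\<lambda>u. length (f u)) ` {u. length u = \<delta>}"
    unfolding upper_norm_def
    by (rule Max_in) (auto simp: finite_words_length intro: exI[of _ "replicate \<delta> undefined"])
  with that show ?thesis by blast
qed

lemma lower_norm_pos: "0 < lower_norm \<delta> f"
  using local_rule by (metis lower_norm_attained length_greater_0_conv local_rule_def)

lemma not_uniformE:
  assumes "\<not> uniform \<delta> f"
  obtains u v where "length u = \<delta>" "length v = \<delta>" "length (f u) \<noteq> length (f v)"
  using assms lower_norm_attained upper_norm_attained unfolding uniform_def by metis

lemma dill_block_length_le: "length (dill_block f \<delta> x k) \<le> upper_norm \<delta> f"
  unfolding dill_block_def by (rule length_le_upper_norm) (simp add: factor_def)

lemma dill_start_le: "dill_start f \<delta> x k \<le> k * upper_norm \<delta> f"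
proof (induction k)
  case (Suc k)
  then show ?case using dill_block_length_le[of x k] by (simp add: dill_start_Suc)
qed simp

lemma dill_map_short_period:
  assumes H: "preserves_besicovitch_null (dill_map f \<delta>)" and nu: "\<not> uniform \<delta> f"
    and G: "suffix P (dill_map f \<delta> s) = dill_map f \<delta> s" "0 < P"
  obtains D where "0 < D" "D \<le> \<delta> * upper_norm \<delta> f" "suffix D (dill_map f \<delta> s) = dill_map f \<delta> s"
proof -
  let ?G = "dill_map f \<delta> s"
  have period: "\<exists>D>0. D \<le> \<delta> * upper_norm \<delta> f \<and> suffix D ?G = ?G"
    if pq: "length p = n" "length q = n" "n \<le> \<delta>"
      and ne: "dill_start f \<delta> (p \<frown> s) n \<noteq> dill_start f \<delta> (q \<frown> s) n" for p q n
  proof -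
    let ?Sp = "dill_start f \<delta> (p \<frown> s) n" and ?Sq = "dill_start f \<delta> (q \<frown> s) n"
    have s_p: "suffix n (p \<frown> s) = s" and s_q: "suffix n (q \<frown> s) = s"
      using suffix_conc_length pq by metis+
    have "suffix (?Sp - ?Sq) ?G = ?G"
      using dill_map_suffix_periodic_start_diff[OF H, of n "p \<frown> s" "q \<frown> s" P] G by (simp add: s_p s_q)
    moreover have "suffix (?Sq - ?Sp) ?G = ?G"
      using dill_map_suffix_periodic_start_diff[OF H, of n "q \<frown> s" "p \<frown> s" P] G by (simp add: s_p s_q)
    ultimately have "suffix ((?Sp - ?Sq) + (?Sq - ?Sp)) ?G = ?G" by (rule suffix_periodic_add)
    moreover have "?Sp \<le> \<delta> * upper_norm \<delta> f" "?Sq \<le> \<delta> * upper_norm \<delta> f"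
      using dill_start_le[of _ n] mult_le_mono1[OF pq(3)] by (metis le_trans)+
    ultimately show ?thesis using ne by (intro exI[of _ "(?Sp - ?Sq) + (?Sq - ?Sp)"]) auto
  qed
  obtain u v where uv: "length u = \<delta>" "length v = \<delta>" "length (f u) \<noteq> length (f v)"
    using nu by (rule not_uniformE)
  have "\<exists>D>0. D \<le> \<delta> * upper_norm \<delta> f \<and> suffix D ?G = ?G"
  proof (cases "dill_start f \<delta> (u \<frown> s) \<delta> = dill_start f \<delta> (v \<frown> s) \<delta>")
    case True
    \<comment> \<open>since \<open>length (f u) \<noteq> length (f v)\<close>, the tails of \<open>u\<close> and \<open>v\<close> then give
      different shifts\<close>
    then have "dill_start f \<delta> (drop 1 u \<frown> s) (\<delta> - 1) \<noteq> dill_start f \<delta> (drop 1 v \<frown> s) (\<delta> - 1)"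
      using uv by (simp add: dill_start_conc_diameter)
    then show ?thesis using uv by (intro period) simp_all
  qed (use uv in \<open>intro period, simp_all\<close>)
  with that show ?thesis by blast
qed

lemma dill_map_eq_const_if_periodic:
  assumes H: "preserves_besicovitch_null (dill_map f \<delta>)" and nu: "\<not> uniform \<delta> f"
    and s: "suffix m s = s" "0 < m"
    and prefix_const: "\<And>i. i < (\<delta> + 1) * upper_norm \<delta> f + \<delta> \<Longrightarrow> s i = a"
  shows "dill_map f \<delta> s = dill_map f \<delta> (\<lambda>_. a)"
proof -
  let ?c = "dill_map f \<delta> (\<lambda>_. a)"
  let ?L = "dill_start f \<delta> (\<lambda>_. a) 1"
  let ?M = "(\<delta> + 1) * upper_norm \<delta> f"
  have "suffix (dill_start f \<delta> s m) (dill_map f \<delta> s) = dill_map f \<delta> s"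
    using suffix_dill_map[of s m] s(1) by simp
  moreover have "0 < dill_start f \<delta> s m" using dill_start_ge[of m s] s(2) by linarith
  ultimately obtain D where D: "0 < D" "D \<le> \<delta> * upper_norm \<delta> f"
    "suffix D (dill_map f \<delta> s) = dill_map f \<delta> s"
    using dill_map_short_period[OF H nu] by blast
  have agree: "dill_map f \<delta> s i = ?c i" if "i < D + ?L" for i
  proof -
    have "?L \<le> upper_norm \<delta> f" using dill_start_le[of _ 1] by simp
    moreover have "?M \<le> dill_start f \<delta> s ?M" by (rule dill_start_ge)
    ultimately have "i < dill_start f \<delta> s ?M" using that D(2) by (simp add: algebra_simps)
    then show ?thesis using prefix_const by (intro dill_map_local[of ?M]) simp
  qed
  show ?thesis
  proof (rule suffix_periodic_eqI[OF D(3,1)])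
    show "suffix ?L ?c = ?c" by (rule dill_map_const_periodic[OF H])
    show "0 < ?L" using dill_start_ge[of 1 "\<lambda>_. a"] by simp
  qed (rule agree)
qed

lemma dill_map_eq_const_if_not_uniform:
  assumes H: "preserves_besicovitch_null (dill_map f \<delta>)" and nu: "\<not> uniform \<delta> f"
  shows "dill_map f \<delta> x = dill_map f \<delta> (\<lambda>_. a)"
proof
  fix n
  let ?c = "dill_map f \<delta> (\<lambda>_. a)"
  \<comment> \<open>\<open>s\<close> repeats \<open>K\<close> copies of \<open>a\<close> followed by a prefix of \<open>x\<close>: its image is that of the
    constant sequence, and \<open>suffix K s\<close> agrees with \<open>x\<close> long enough to fix the image at \<open>n\<close>.\<close>
  define K where "K = (\<delta> + 1) * upper_norm \<delta> f + \<delta>"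
  define w where "w = replicate K a @ prefix (n + 1 + \<delta>) x"
  define s where "s = w\<^sup>\<omega>"
  have w_len: "length w = K + (n + 1 + \<delta>)" by (simp add: w_def)
  then have s_unroll: "s = w \<frown> s" unfolding s_def by (intro iter_unroll) simp
  have s_w: "s i = w ! i" if "i < length w" for i
    using that by (subst s_unroll) simp
  have "dill_map f \<delta> s = ?c"
  proof (rule dill_map_eq_const_if_periodic[OF H nu])
    show "suffix (length w) s = s" using s_unroll by (metis suffix_conc_length)
    show "0 < length w" using w_len by simp
    show "s i = a" if "i < (\<delta> + 1) * upper_norm \<delta> f + \<delta>" for i
      using that s_w[of i] w_len by (simp add: w_def K_def nth_append)
  qed
  then have "dill_map f \<delta> (suffix K s) = ?c"
    by (metis suffix_dill_map dill_map_const_periodic[OF H])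
  moreover have "dill_map f \<delta> x n = dill_map f \<delta> (suffix K s) n"
  proof (rule dill_map_local[of "n + 1"])
    show "x i = suffix K s i" if "i < n + 1 + \<delta>" for i
      using that s_w[of "K + i"] w_len by (simp add: w_def suffix_nth nth_append del: subseq_to_Suc)
    show "n < dill_start f \<delta> x (n + 1)" using dill_start_ge[of "n + 1" x] by simp
  qed
  ultimately show "dill_map f \<delta> x n = ?c n" by simp
qed

lemma hamming_le_D_max:
  assumes "length u = \<delta>" "length v = \<delta>" "length (f u) = length (f v)"
  shows "hamming (f u) (f v) \<le> D_max \<delta> f"
  unfolding D_max_def
proof (rule Max_ge)
  let ?W = "{u :: 'a list. length u = \<delta>}"
  have "{hamming (f u) (f v) |u v. length u = \<delta> \<and> length v = \<delta> \<and> length (f u) = length (f v)}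
      \<subseteq> (\<lambda>(u, v). hamming (f u) (f v)) ` (?W \<times> ?W)"
    by auto
  then show "finite {hamming (f u) (f v) |u v. length u = \<delta> \<and> length v = \<delta> \<and> length (f u) = length (f v)}"
    by (rule finite_subset) (simp add: finite_words_length)
qed (use assms in blast)

end

section \<open>Uniform rules are Lipschitz\<close>

locale uniform_dill_rule = finite_dill_rule +
  assumes uniform: "uniform \<delta> f"
begin

lemma length_eq_lower_norm: "length u = \<delta> \<Longrightarrow> length (f u) = lower_norm \<delta> f"
  using lower_norm_le_length length_le_upper_norm uniform unfolding uniform_def by (metis le_antisym)

lemma dill_block_length: "length (dill_block f \<delta> x k) = lower_norm \<delta> f"
  unfolding dill_block_def by (rule length_eq_lower_norm) (simp add: factor_def)

lemma dill_start_uniform: "dill_start f \<delta> x k = k * lower_norm \<delta> f"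
  by (simp add: dill_start_def dill_block_length)

lemma mismatches_dill_map_blocks:
  "mismatches (dill_map f \<delta> x) (dill_map f \<delta> y) (K * lower_norm \<delta> f)
    = (\<Sum>k<K. hamming (dill_block f \<delta> x k) (dill_block f \<delta> y k))"
proof (induction K)
  case (Suc K)
  let ?L = "lower_norm \<delta> f"
  have "suffix (K * ?L) (dill_map f \<delta> z) = dill_map f \<delta> (suffix K z)" for z
    using suffix_dill_map[of z K] by (simp add: dill_start_uniform)
  moreover have "dill_map f \<delta> (suffix K z) i = dill_block f \<delta> z K ! i" if "i < ?L" for z i
    using dill_map_block[of i "suffix K z" 0] that by (simp add: dill_block_length dill_block_suffix)
  ultimately have block: "mismatches (suffix (K * ?L) (dill_map f \<delta> x)) (suffix (K * ?L) (dill_map f \<delta> y)) ?L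
      = hamming (dill_block f \<delta> x K) (dill_block f \<delta> y K)"
    unfolding hamming_eq_mismatches dill_block_length by (simp cong: mismatches_cong)
  have "Suc K * ?L = K * ?L + ?L" by simp
  then show ?case by (simp only: mismatches_add block Suc.IH sum.lessThan_Suc)
qed simp

lemma hamming_dill_block_le:
  "hamming (dill_block f \<delta> x k) (dill_block f \<delta> y k)
    \<le> D_max \<delta> f * mismatches (suffix k x) (suffix k y) \<delta>"
proof (cases "mismatches (suffix k x) (suffix k y) \<delta> = 0")
  case True
  then have "prefix \<delta> (suffix k x) = prefix \<delta> (suffix k y)"
    by (auto simp: mismatches_def subsequence_def)
  then have "dill_block f \<delta> x k = dill_block f \<delta> y k"
    using subsequence_prefix_suffix[where i = k and j = "k + \<delta>" and w = x]
      subsequence_prefix_suffix[where i = k and j = "k + \<delta>" and w = y]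
    by (simp add: dill_block_def factor_eq_subsequence)
  then show ?thesis by (simp add: hamming_def)
next
  case False
  have "hamming (dill_block f \<delta> x k) (dill_block f \<delta> y k) \<le> D_max \<delta> f"
    unfolding dill_block_def by (rule hamming_le_D_max) (simp_all add: factor_def length_eq_lower_norm)
  also have "\<dots> \<le> D_max \<delta> f * mismatches (suffix k x) (suffix k y) \<delta>" using False by simp
  finally show ?thesis .
qed

lemma mismatches_dill_map_le:
  "mismatches (dill_map f \<delta> x) (dill_map f \<delta> y) l
    \<le> D_max \<delta> f * \<delta> * mismatches x y (l div lower_norm \<delta> f + 1 + \<delta>)"
proof -
  let ?L = "lower_norm \<delta> f" and ?K = "l div lower_norm \<delta> f + 1"
  have "l = l div ?L * ?L + l mod ?L" by (rule div_mult_mod_eq[symmetric])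
  moreover have "l mod ?L < ?L" using lower_norm_pos by simp
  ultimately have "l \<le> ?K * ?L" by (simp add: distrib_right)
  then have "mismatches (dill_map f \<delta> x) (dill_map f \<delta> y) l
      \<le> mismatches (dill_map f \<delta> x) (dill_map f \<delta> y) (?K * ?L)"
    by (rule mismatches_mono)
  also have "\<dots> = (\<Sum>k<?K. hamming (dill_block f \<delta> x k) (dill_block f \<delta> y k))"
    by (rule mismatches_dill_map_blocks)
  also have "\<dots> \<le> (\<Sum>k<?K. D_max \<delta> f * mismatches (suffix k x) (suffix k y) \<delta>)"
    by (intro sum_mono hamming_dill_block_le)
  also have "\<dots> \<le> D_max \<delta> f * (\<delta> * mismatches x y (?K + \<delta>))"
    unfolding sum_distrib_left[symmetric] by (intro mult_left_mono sum_mismatches_windows_le) simp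
  finally show ?thesis by (simp add: mult.assoc)
qed

lemma besicovitch_dill_map_le:
  "besicovitch (dill_map f \<delta> x) (dill_map f \<delta> y)
    \<le> ereal (real \<delta> * real (D_max \<delta> f) / real (lower_norm \<delta> f)) * besicovitch x y"
proof -
  let ?L = "lower_norm \<delta> f"
  let ?C = "real \<delta> * real (D_max \<delta> f) / real ?L"
  define h where "h l = l div ?L + 1 + \<delta>" for l
  define r where "r l = real ?L * real (h l) / real l" for l
  have L: "0 < ?L" by (rule lower_norm_pos)
  have bound: "mismatch_density (dill_map f \<delta> x) (dill_map f \<delta> y) l
      \<le> r l * (?C * mismatch_density x y (h l))" if "0 < l" for l
  proof -
    have "real (mismatches (dill_map f \<delta> x) (dill_map f \<delta> y) l)
        \<le> real (D_max \<delta> f) * real \<delta> * real (mismatches x y (h l))"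
      using mismatches_dill_map_le[of x y l] unfolding h_def by (simp only: of_nat_le_iff of_nat_mult[symmetric])
    moreover have "r l * (?C * mismatch_density x y (h l))
        = real (D_max \<delta> f) * real \<delta> * real (mismatches x y (h l)) / real l"
      using L by (simp add: r_def mismatch_density_def h_def)
    ultimately show ?thesis
      unfolding mismatch_density_def by (simp add: divide_right_mono)
  qed
  have "r \<longlonglongrightarrow> 1"
  proof (rule tendsto_sandwich[OF _ _ tendsto_const])
    have "l \<le> ?L * h l \<and> ?L * h l \<le> l + ?L * (1 + \<delta>)" for l
    proof -
      have "?L * (l div ?L) \<le> l" "l < ?L * (l div ?L) + ?L"
        using mult_div_mod_eq[of ?L l] mod_less_divisor[OF L, of l] by linarith+
      then show ?thesis unfolding h_def distrib_left mult_1_right by linarith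
    qed
    then have rb: "1 \<le> r l \<and> r l \<le> 1 + real (?L * (1 + \<delta>)) / real l" if "0 < l" for l
      using that
      by (simp add: r_def field_simps del: of_nat_add of_nat_mult)
        (simp only: of_nat_add[symmetric] of_nat_mult[symmetric] of_nat_le_iff)
    show "\<forall>\<^sub>F l in sequentially. 1 \<le> r l"
      using eventually_gt_at_top[of "0 :: nat"] by (rule eventually_mono) (use rb in blast)
    show "\<forall>\<^sub>F l in sequentially. r l \<le> 1 + real (?L * (1 + \<delta>)) / real l"
      using eventually_gt_at_top[of "0 :: nat"] by (rule eventually_mono) (use rb in blast)
    show "(\<lambda>l. 1 + real (?L * (1 + \<delta>)) / real l) \<longlonglongrightarrow> 1"
      using tendsto_add[OF tendsto_const lim_const_over_n, of 1] by simp
  qed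
  have h: "filterlim h sequentially sequentially"
    unfolding filterlim_at_top
  proof
    fix Z
    have "Z \<le> h l" if "Z * ?L \<le> l" for l
      using that less_eq_div_iff_mult_less_eq[OF L, of Z l] by (simp add: h_def)
    with eventually_ge_at_top[of "Z * ?L"] show "\<forall>\<^sub>F l in sequentially. Z \<le> h l"
      by (rule eventually_mono)
  qed
  have "\<forall>\<^sub>F l in sequentially. ereal (mismatch_density (dill_map f \<delta> x) (dill_map f \<delta> y) l)
      \<le> ereal (r l) * ereal (?C * mismatch_density x y (h l))"
    using eventually_gt_at_top[of 0] by (rule eventually_mono) (simp only: times_ereal.simps ereal_less_eq bound)
  then have "besicovitch (dill_map f \<delta> x) (dill_map f \<delta> y)
      \<le> limsup (\<lambda>l. ereal (r l) * ereal (?C * mismatch_density x y (h l)))"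
    unfolding besicovitch_eq_limsup by (rule Limsup_mono)
  also have "\<dots> = 1 * limsup (\<lambda>l. ereal (?C * mismatch_density x y (h l)))"
    by (rule ereal_limsup_lim_mult) (use \<open>r \<longlonglongrightarrow> 1\<close> in \<open>simp_all add: one_ereal_def\<close>)
  also have "\<dots> = ereal ?C * limsup (\<lambda>l. ereal (mismatch_density x y (h l)))"
    using limsup_ereal_mult_left[of ?C "\<lambda>l. ereal (mismatch_density x y (h l))"] by simp
  also have "\<dots> \<le> ereal ?C * besicovitch x y"
    unfolding besicovitch_eq_limsup by (intro ereal_mult_left_mono limsup_compose_le h) simp
  finally show ?thesis .
qed

end

theorem mainTheorem3:
  fixes f :: "'a::finite list \<Rightarrow> 'a list" and \<delta> :: nat
  assumes "local_rule \<delta> f"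
  shows "((\<forall>x y. besicovitch x y = 0 \<longrightarrow>
             besicovitch (dill_map f \<delta> x) (dill_map f \<delta> y) = 0)
          \<longleftrightarrow>
          (\<forall>x y. besicovitch (dill_map f \<delta> x) (dill_map f \<delta> y)
             \<le> ereal (real \<delta> * real (D_max \<delta> f) / real (lower_norm \<delta> f)) * besicovitch x y))
      \<and> ((\<forall>x y. besicovitch x y = 0 \<longrightarrow>
             besicovitch (dill_map f \<delta> x) (dill_map f \<delta> y) = 0)
          \<longleftrightarrow>
          ((\<exists>c. \<forall>x. dill_map f \<delta> x = c) \<or> uniform \<delta> f))"
proof -
  interpret finite_dill_rule f \<delta> by unfold_locales (rule assms)
  let ?F = "dill_map f \<delta>"
  let ?C = "real \<delta> * real (D_max \<delta> f) / real (lower_norm \<delta> f)"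
  have lipschitz: "besicovitch (?F x) (?F y) \<le> ereal ?C * besicovitch x y"
    if "(\<exists>c. \<forall>x. ?F x = c) \<or> uniform \<delta> f" for x y
  proof (cases "uniform \<delta> f")
    case True
    then interpret uniform_dill_rule f \<delta> by unfold_locales
    show ?thesis by (rule besicovitch_dill_map_le)
  next
    case False
    with that obtain c where "\<And>x. ?F x = c" by blast
    then show ?thesis by (rule besicovitch_lipschitz_if_constant) simp
  qed
  have "(\<exists>c. \<forall>x. ?F x = c) \<or> uniform \<delta> f" if "preserves_besicovitch_null ?F"
    using dill_map_eq_const_if_not_uniform[OF that] by blast
  with lipschitz preserves_besicovitch_null_if_lipschitz[of ?F ?C]
  have "(preserves_besicovitch_null ?F \<longleftrightarrow> (\<forall>x y. besicovitch (?F x) (?F y) \<le> ereal ?C * besicovitch x y))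
      \<and> (preserves_besicovitch_null ?F \<longleftrightarrow> (\<exists>c. \<forall>x. ?F x = c) \<or> uniform \<delta> f)"
    by blast
  then show ?thesis unfolding preserves_besicovitch_null_def .
qed

end
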